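(* Let $n\ge1$ and let $a$ be an inversion sequence of length $n$. Then $a$ avoids each of the patterns $102$, $201$, $210$ if and only if $a$ can be written either as $a=p_1\circ p_2$ or as $a=p_1\circ r_2$, where: (i) $p_1$ is a (possibly empty) non-decreasing sequence with $\max(p_1)<\max(a)$ (if nonempty); (ii) $p_2$ is a nonempty sequence with all entries in $\{\max(a),\operatorname{premax}(a)\}$ whose first entry is $\max(a)$; (iii) $r_2=(\max(a),\dots,\max(a),k,\dots,k)$ consists of one or more copies of $\max(a)$ followed by one or more copies of a single value $k$ with $0\le k<\operatorname{premax}(a)$. (When $a$ has only one distinct value, $\operatorname{premax}(a)$ is undefined, and the decomposition is $p_1$ empty and $p_2=a$.)
   Context: An inversion sequence of length $n$ is an integer sequence $(a_1,\dots,a_n)$ with $0\le a_i<i$ for all $i$. A pattern is a sequence $\sigma$ of non-negative integers containing every value from $0$ to $\max(\sigma)$; the reduction of a sequence replaces its smallest values by $0$, the next smallest by $1$, etc. A sequence $a$ contains $\sigma$ if some (not necessarily consecutive) subsequence of $a$ has reduction $\sigma$; otherwise $a$ avoids $\sigma$. For a sequence $a$, $\max(a)$ is its largest value and $\operatorname{premax}(a)$ is the largest value of $a$ strictly less than $\max(a)$. $\circ$ denotes concatenation. *)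

theory Defs
  imports Main "HOL-Library.Sublist"
begin

text \<open>Inversion sequence of length n, as a 0-indexed list: entry at position i (1-indexed i+1)
  satisfies a_(i+1) < i+1.\<close>
definition inv_seq :: "nat \<Rightarrow> nat list \<Rightarrow> bool" where
  "inv_seq n a \<longleftrightarrow> length a = n \<and> (\<forall>i<n. a ! i < i + 1)"

definition reduction :: "nat list \<Rightarrow> nat list" where
  "reduction xs = map (\<lambda>x. card {y \<in> set xs. y < x}) xs"

definition contains :: "nat list \<Rightarrow> nat list \<Rightarrow> bool" where
  "contains a \<sigma> \<longleftrightarrow> (\<exists>s. subseq s a \<and> reduction s = \<sigma>)"

definition avoids :: "nat list \<Rightarrow> nat list \<Rightarrow> bool" where
  "avoids a \<sigma> \<longleftrightarrow> \<not> contains a \<sigma>"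

definition seqmax :: "nat list \<Rightarrow> nat" where
  "seqmax a = Max (set a)"

text \<open>Largest value strictly less than the maximum (unspecified if a has one distinct value).\<close>
definition premax :: "nat list \<Rightarrow> nat" where
  "premax a = Max {x \<in> set a. x < seqmax a}"

end

theory Submission
  imports Defs
begin

(* The patterns 102, 201 and 210 are exactly the triples x, y, z (in this order) with y < x and
   z \<notin> {x, y}.  Hence a avoids all three iff after every descent x > y only the values x and y
   occur again.  Split a at the first occurrence of its maximum M: a descent before it would be
   followed by M, so the prefix is sorted; after it, M > c for every other value c, so all those
   values coincide.  If their common value k is not premax a, then premax a lies in the prefix,
   and the descent premax a > k forbids any later M.  Conversely, in both shapes every descent
   ends in the part after the sorted prefix, where at most two values occur. *)

definition descent_closed :: "nat list \<Rightarrow> bool" where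
  "descent_closed a \<longleftrightarrow> (\<forall>x y z. subseq [x, y, z] a \<longrightarrow> y < x \<longrightarrow> z = x \<or> z = y)"

lemma Collect_eq_or_conj:
  "{w. (w = c \<or> Q w) \<and> P w} = (if P c then insert c {w. Q w \<and> P w} else {w. Q w \<and> P w})"
  by auto

lemma reduction_102: "reduction [x, y, z] = [1, 0, 2] \<longleftrightarrow> y < x \<and> x < z"
  by (cases x y rule: linorder_cases; cases y z rule: linorder_cases; cases x z rule: linorder_cases)
     (simp_all add: reduction_def Collect_eq_or_conj Collect_conv_if)

lemma reduction_201: "reduction [x, y, z] = [2, 0, 1] \<longleftrightarrow> y < z \<and> z < x"
  by (cases x y rule: linorder_cases; cases y z rule: linorder_cases; cases x z rule: linorder_cases)
     (simp_all add: reduction_def Collect_eq_or_conj Collect_conv_if)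

lemma reduction_210: "reduction [x, y, z] = [2, 1, 0] \<longleftrightarrow> z < y \<and> y < x"
  by (cases x y rule: linorder_cases; cases y z rule: linorder_cases; cases x z rule: linorder_cases)
     (simp_all add: reduction_def Collect_eq_or_conj Collect_conv_if)

lemma contains_length3_iff:
  "contains a [p, q, r] \<longleftrightarrow> (\<exists>x y z. subseq [x, y, z] a \<and> reduction [x, y, z] = [p, q, r])"
proof
  assume "contains a [p, q, r]"
  then obtain s where s: "subseq s a" "reduction s = [p, q, r]"
    by (auto simp: contains_def)
  have "length s = 3"
    using arg_cong[OF s(2), of length] by (simp add: reduction_def)
  then obtain x y z where "s = [x, y, z]"
    by (auto simp: length_Suc_conv numeral_3_eq_3)
  with s show "\<exists>x y z. subseq [x, y, z] a \<and> reduction [x, y, z] = [p, q, r]"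
    by blast
qed (auto simp: contains_def)

lemma avoids_102_201_210_iff_descent_closed:
  "avoids a [1, 0, 2] \<and> avoids a [2, 0, 1] \<and> avoids a [2, 1, 0] \<longleftrightarrow> descent_closed a"
proof -
  have "(y < x \<and> x < z) \<or> (y < z \<and> z < x) \<or> (z < y \<and> y < x) \<longleftrightarrow>
      y < x \<and> z \<noteq> x \<and> z \<noteq> y" for x y z :: nat
    by auto
  then show ?thesis
    unfolding avoids_def contains_length3_iff reduction_102 reduction_201 reduction_210
      descent_closed_def
    by blast
qed

lemma set_mono_subseq: "subseq xs ys \<Longrightarrow> set xs \<subseteq> set ys"
  by (induction rule: list_emb.induct) auto

lemma sorted_subseq: "subseq xs ys \<Longrightarrow> sorted ys \<Longrightarrow> sorted xs"
  by (induction rule: list_emb.induct) (auto dest: set_mono_subseq)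

lemma sorted_if_subseq_pairs: "(\<And>x y. subseq [x, y] xs \<Longrightarrow> x \<le> y) \<Longrightarrow> sorted xs"
proof (induction xs)
  case (Cons x xs)
  have "x \<le> y" if "y \<in> set xs" for y
    using Cons.prems[of x y] that by (simp add: subseq_singleton_left)
  moreover have "sorted xs"
    using Cons.IH Cons.prems list_emb_Cons by blast
  ultimately show ?case
    by simp
qed simp

lemma subseq3_descent_sorted_append:
  assumes "sorted u" "subseq [x, y, z] (u @ v)" "y < x"
  shows "y \<in> set v \<and> z \<in> set v"
proof -
  obtain s1 s2 where s: "[x, y, z] = s1 @ s2" "subseq s1 u" "subseq s2 v"
    using assms(2) by (rule subseq_appendE)
  have no_descent: "\<not> subseq (x # y # w) u" for w
  proof
    assume "subseq (x # y # w) u"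
    then have "sorted (x # y # w)"
      using assms(1) by (rule sorted_subseq)
    with assms(3) show False
      by (auto dest: leD)
  qed
  have "s2 = [x, y, z] \<or> s2 = [y, z]"
    using s(1,2) no_descent by (auto simp: Cons_eq_append_conv)
  moreover have "set s2 \<subseteq> set v"
    using s(3) by (rule set_mono_subseq)
  ultimately show ?thesis
    by auto
qed

lemma descent_closedD_append:
  assumes "descent_closed (u @ v @ w)" "x \<in> set u" "y \<in> set v" "y < x"
  shows "set w \<subseteq> {x, y}"
proof
  fix z assume "z \<in> set w"
  with assms(2,3) have "subseq ([x] @ [y] @ [z]) (u @ v @ w)"
    by (intro list_emb_append_mono) (simp_all add: subseq_singleton_left)
  with assms(1,4) show "z \<in> {x, y}"
    by (auto simp: descent_closed_def)
qed

lemma le_seqmax: "c \<in> set a \<Longrightarrow> c \<le> seqmax a"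
  by (simp add: seqmax_def)

lemma seqmax_in_set: "a \<noteq> [] \<Longrightarrow> seqmax a \<in> set a"
  by (simp add: seqmax_def)

lemma
  assumes "c \<in> set a" "c < seqmax a"
  shows premax_in_set: "premax a \<in> set a"
    and premax_less_seqmax: "premax a < seqmax a"
    and le_premax: "c \<le> premax a"
proof -
  have "premax a \<in> {x \<in> set a. x < seqmax a}"
    unfolding premax_def using assms by (intro Max_in) auto
  then show "premax a \<in> set a" "premax a < seqmax a"
    by auto
  show "c \<le> premax a"
    unfolding premax_def using assms by (intro Max_ge) auto
qed

lemma descent_closed_sorted_append_replicate:
  assumes "sorted u"
  shows "descent_closed (u @ replicate j k)"
  unfolding descent_closed_def
proof (intro allI impI)
  fix x y z
  assume "subseq [x, y, z] (u @ replicate j k)" "y < x"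
  then have "y \<in> set (replicate j k)" "z \<in> set (replicate j k)"
    using subseq3_descent_sorted_append[OF assms] by blast+
  then show "z = x \<or> z = y"
    by simp
qed

lemma descent_closed_sorted_append_max_premax:
  assumes "sorted u" and v: "set v \<subseteq> {seqmax (u @ v), premax (u @ v)}"
  shows "descent_closed (u @ v)"
  unfolding descent_closed_def
proof (intro allI impI)
  fix x y z
  assume xyz: "subseq [x, y, z] (u @ v)" and "y < x"
  let ?M = "seqmax (u @ v)" and ?P = "premax (u @ v)"
  have "y \<in> set v" "z \<in> set v"
    using subseq3_descent_sorted_append[OF \<open>sorted u\<close> xyz \<open>y < x\<close>] by auto
  have x: "x \<in> set (u @ v)"
    using set_mono_subseq[OF xyz] by simp
  then have "y < ?M"
    using \<open>y < x\<close> le_seqmax[OF x] by simp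
  then have "y = ?P"
    using v \<open>y \<in> set v\<close> by auto
  have "x = ?M"
  proof (rule ccontr)
    assume "x \<noteq> ?M"
    then have "x < ?M"
      using le_seqmax[OF x] by simp
    then have "x \<le> ?P"
      by (rule le_premax[OF x])
    with \<open>y < x\<close> \<open>y = ?P\<close> show False
      by simp
  qed
  show "z = x \<or> z = y"
    using v \<open>z \<in> set v\<close> \<open>x = ?M\<close> \<open>y = ?P\<close> by auto
qed

lemma descent_closed_sorted_prefix:
  assumes "descent_closed (u @ M # q)" "\<forall>c\<in>set u. c < M"
  shows "sorted u"
proof (rule sorted_if_subseq_pairs, rule ccontr)
  fix x y
  assume xy: "subseq [x, y] u" and "\<not> x \<le> y"
  have "subseq [x, y, M] (u @ M # q)"
    using list_emb_append_mono[OF xy, of "[M]" "M # q"] by simp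
  then have "M = x \<or> M = y"
    using assms(1)[unfolded descent_closed_def, rule_format, of x y M] \<open>\<not> x \<le> y\<close> by auto
  moreover have "x \<in> set u" "y \<in> set u"
    using set_mono_subseq[OF xy] by auto
  ultimately show False
    using assms(2) by auto
qed

lemma descent_closed_tail_after_first_max:
  assumes closed: "descent_closed (u @ M # q)" and M: "M = seqmax (u @ M # q)"
    and "\<not> set q \<subseteq> {M, premax (u @ M # q)}"
  obtains i j k where "q = replicate i M @ replicate (Suc j) k" "k < premax (u @ M # q)"
proof -
  let ?a = "u @ M # q"
  let ?P = "premax ?a"
  have le_M: "c \<le> M" if "c \<in> set q" for c
    using le_seqmax[of c ?a] M that by simp
  obtain w where w: "w \<in> set q" "w \<noteq> M" "w \<noteq> ?P"
    using assms(3) by blast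
  then have "\<exists>c\<in>set q. c < M"
    using le_M by force
  then obtain ys k zs where q: "q = ys @ k # zs" "k < M" and ys: "\<forall>y\<in>set ys. \<not> y < M"
    by (rule split_list_first_propE)
  have ys_M: "\<forall>y\<in>set ys. y = M"
    using ys le_M unfolding q(1) by (force simp: not_less)
  have zs_Mk: "set zs \<subseteq> {M, k}"
    using descent_closedD_append[of "u @ M # ys" "[k]" zs M k] closed q by simp
  have q_Mk: "set q \<subseteq> {M, k}"
    using ys_M zs_Mk unfolding q(1) by auto
  have k: "k \<in> set ?a" "k < seqmax ?a"
    using q M by auto
  have "k < ?P"
    using le_premax[OF k] w q_Mk by auto
  have "?P \<in> set ?a" "?P < M"
    using premax_in_set[OF k] premax_less_seqmax[OF k] M by simp_all
  moreover have "?P \<notin> set q"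
    using q_Mk \<open>k < ?P\<close> \<open>?P < M\<close> by auto
  ultimately have "?P \<in> set u"
    by auto
  then have "set zs \<subseteq> {?P, k}"
    using descent_closedD_append[of u "M # ys @ [k]" zs ?P k] closed q \<open>k < ?P\<close> by simp
  with zs_Mk \<open>?P < M\<close> have "\<forall>z\<in>set zs. z = k"
    by auto
  then have "q = replicate (length ys) M @ replicate (Suc (length zs)) k"
    using ys_M unfolding q(1) by (simp add: replicate_length_same)
  then show ?thesis
    using \<open>k < ?P\<close> by (rule that)
qed

lemma descent_closed_decomposition:
  assumes "a \<noteq> []" and closed: "descent_closed a"
  shows "(\<exists>p1 p2. a = p1 @ p2
        \<and> sorted p1 \<and> (p1 \<noteq> [] \<longrightarrow> seqmax p1 < seqmax a)
        \<and> p2 \<noteq> [] \<and> hd p2 = seqmax a \<and> set p2 \<subseteq> {seqmax a, premax a})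
     \<or> (\<exists>p1 i j k. a = p1 @ replicate i (seqmax a) @ replicate j k
        \<and> sorted p1 \<and> (p1 \<noteq> [] \<longrightarrow> seqmax p1 < seqmax a)
        \<and> i \<ge> 1 \<and> j \<ge> 1 \<and> k < premax a)"
proof -
  define M where "M = seqmax a"
  obtain u q where a: "a = u @ M # q" and "M \<notin> set u"
    using split_list_first[OF seqmax_in_set[OF assms(1)]] unfolding M_def by blast
  have u_less: "\<forall>c\<in>set u. c < M"
  proof
    fix c assume "c \<in> set u"
    then have "c \<in> set a"
      using a by simp
    then have "c \<le> M"
      unfolding M_def by (rule le_seqmax)
    moreover have "c \<noteq> M"
      using \<open>M \<notin> set u\<close> \<open>c \<in> set u\<close> by blast
    ultimately show "c < M"
      by simp
  qed
  have "sorted u"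
    using descent_closed_sorted_prefix closed u_less unfolding a by blast
  moreover have "u \<noteq> [] \<longrightarrow> seqmax u < M"
    using seqmax_in_set u_less by blast
  ultimately show ?thesis
  proof (cases "set q \<subseteq> {M, premax a}")
    case True
    then have "a = u @ (M # q) \<and> M # q \<noteq> [] \<and> hd (M # q) = M \<and> set (M # q) \<subseteq> {M, premax a}"
      using a by simp
    with \<open>sorted u\<close> \<open>u \<noteq> [] \<longrightarrow> seqmax u < M\<close> show ?thesis
      unfolding M_def[symmetric] by blast
  next
    case False
    have "M = seqmax (u @ M # q)"
      using M_def unfolding a .
    with closed False obtain i j k where "q = replicate i M @ replicate (Suc j) k" "k < premax a"
      using descent_closed_tail_after_first_max[of u M q] unfolding a by blast
    then have "a = u @ replicate (Suc i) M @ replicate (Suc j) k"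
      using a by simp
    with \<open>k < premax a\<close> \<open>sorted u\<close> \<open>u \<noteq> [] \<longrightarrow> seqmax u < M\<close> show ?thesis
      unfolding M_def[symmetric]
      by (intro disjI2 exI[of _ u] exI[of _ "Suc i"] exI[of _ "Suc j"] exI[of _ k]) simp
  qed
qed

lemma descent_closed_sorted_below_replicate:
  assumes "sorted u" "\<forall>c\<in>set u. c \<le> M"
  shows "descent_closed (u @ replicate i M @ replicate j k)"
proof -
  have "sorted (u @ replicate i M)"
    using assms by (auto simp: sorted_append)
  then show ?thesis
    using descent_closed_sorted_append_replicate[of "u @ replicate i M" j k] by simp
qed

lemma decomposition_imp_descent_closed:
  assumes "(\<exists>p1 p2. a = p1 @ p2
        \<and> sorted p1 \<and> (p1 \<noteq> [] \<longrightarrow> seqmax p1 < seqmax a)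
        \<and> p2 \<noteq> [] \<and> hd p2 = seqmax a \<and> set p2 \<subseteq> {seqmax a, premax a})
     \<or> (\<exists>p1 i j k. a = p1 @ replicate i (seqmax a) @ replicate j k
        \<and> sorted p1 \<and> (p1 \<noteq> [] \<longrightarrow> seqmax p1 < seqmax a)
        \<and> i \<ge> 1 \<and> j \<ge> 1 \<and> k < premax a)"
  shows "descent_closed a"
  using assms
proof (elim disjE exE conjE)
  fix p1 p2
  assume "a = p1 @ p2" "sorted p1" "set p2 \<subseteq> {seqmax a, premax a}"
  then show ?thesis
    using descent_closed_sorted_append_max_premax by simp
next
  fix p1 i j k
  assume a: "a = p1 @ replicate i (seqmax a) @ replicate j k" and "sorted p1"
    and "p1 \<noteq> [] \<longrightarrow> seqmax p1 < seqmax a"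
  have "\<forall>c\<in>set p1. c \<le> seqmax a"
  proof
    fix c assume "c \<in> set p1"
    then have "c \<le> seqmax p1" "seqmax p1 < seqmax a"
      using le_seqmax \<open>p1 \<noteq> [] \<longrightarrow> seqmax p1 < seqmax a\<close> by auto
    then show "c \<le> seqmax a"
      by simp
  qed
  with \<open>sorted p1\<close> show ?thesis
    by (subst a) (rule descent_closed_sorted_below_replicate)
qed

theorem mainTheorem2:
  fixes n :: nat and a :: "nat list"
  assumes "n \<ge> 1" and "inv_seq n a"
  shows "(avoids a [1,0,2] \<and> avoids a [2,0,1] \<and> avoids a [2,1,0]) \<longleftrightarrow>
    ((\<exists>p1 p2. a = p1 @ p2
        \<and> sorted p1 \<and> (p1 \<noteq> [] \<longrightarrow> seqmax p1 < seqmax a)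
        \<and> p2 \<noteq> [] \<and> hd p2 = seqmax a \<and> set p2 \<subseteq> {seqmax a, premax a})
     \<or> (\<exists>p1 i j k. a = p1 @ replicate i (seqmax a) @ replicate j k
        \<and> sorted p1 \<and> (p1 \<noteq> [] \<longrightarrow> seqmax p1 < seqmax a)
        \<and> i \<ge> 1 \<and> j \<ge> 1 \<and> k < premax a))"
proof -
  have "a \<noteq> []"
    using assms by (auto simp: inv_seq_def)
  show ?thesis
    unfolding avoids_102_201_210_iff_descent_closed
    using descent_closed_decomposition[OF \<open>a \<noteq> []\<close>] decomposition_imp_descent_closed
    by (intro iffI) simp_all
qed

end
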